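(* Let $N=n^2$ and let $\bm{y}\in\mathbb{R}^{N}$ be the vectorized observations of a directed network on $n$ nodes, indexed by ordered pairs $(i,j)$, $1\le i,j\le n$. Let $\bm{X}$ be a fixed $N\times p$ covariate matrix of full column rank, $\bm{P}_X=\bm{X}(\bm{X}^\top\bm{X})^{-1}\bm{X}^\top$, and let $\bm{A},\bm{B}$ be the $N\times n$ sender and receiver incidence matrices (the row of $\bm{A}$ for pair $(i,j)$ is the $i$-th standard basis vector of $\mathbb{R}^n$, and the row of $\bm{B}$ for pair $(i,j)$ is the $j$-th standard basis vector). Consider the continuous Restricted Network Regression model $$\bm{y}=\bm{X}\bm{\delta}+(\bm{I}-\bm{P}_X)\bm{A}\bm{a}+(\bm{I}-\bm{P}_X)\bm{B}\bm{b}+\bm{\varepsilon},$$ with flat prior $p(\bm{\delta})\propto 1$, $\bm{a}\sim N(\bm{0},\sigma_a^2\bm{I}_n)$, $\bm{b}\sim N(\bm{0},\sigma_b^2\bm{I}_n)$, $\bm{\varepsilon}\sim N(\bm{0},\sigma_\varepsilon^2\bm{I}_N)$, all mutually independent given the variance parameters, and any prior on $(\sigma_a^2,\sigma_b^2,\sigma_\varepsilon^2)$ (independent of $\bm\delta$) for which the joint posterior is proper and $\mathrm{E}[\sigma^2_\varepsilon\mid\bm{y}]<\infty$. Then the posterior distribution of $\bm{\delta}$ satisfies $$\mathrm{E}[\bm{\delta}\mid\bm{y}]=(\bm{X}^\top\bm{X})^{-1}\bm{X}^\top\bm{y},\qquad \mathrm{Var}(\bm{\delta}\mid\bm{y})=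(\bm{X}^\top\bm{X})^{-1}\,\mathrm{E}[\sigma^2_\varepsilon\mid\bm{y}].$$
   Context: $\bm{I}-\bm{P}_X$ is the orthogonal projection onto the orthogonal complement of the column space of $\bm{X}$; the random effects $\bm a$ (sender) and $\bm b$ (receiver) are thus projected to be orthogonal to the covariates. The parameters $\bm\delta$ are interpreted as unconditional regression effects. *)

theory Defs
  imports "HOL-Analysis.Analysis"
begin

definition gauss_dens :: "real \<Rightarrow> real^'k \<Rightarrow> real" where
  "gauss_dens s x = (2 * pi * s) powr (- real CARD('k) / 2) * exp (- (norm x * norm x) / (2 * s))"

definition proj_X :: "real^'p^'N \<Rightarrow> real^'N^'N" where
  "proj_X X = X ** matrix_inv (transpose X ** X) ** transpose X"

definition sender_inc :: "real^'n^('n \<times> 'n)" where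
  "sender_inc = (\<chi> ij k. if k = fst ij then 1 else 0)"

definition receiver_inc :: "real^'n^('n \<times> 'n)" where
  "receiver_inc = (\<chi> ij k. if k = snd ij then 1 else 0)"

text \<open>Unnormalised joint posterior density of (delta, a, b, (sa2, sb2, se2)) given y
  with respect to lborel (flat prior on delta) x lborel x lborel x (prior on variances).\<close>
definition rnr_post_dens ::
  "real^'p::finite^('n::finite\<times>'n) \<Rightarrow> real^('n\<times>'n) \<Rightarrow>
   (real^'p) \<times> (real^'n) \<times> (real^'n) \<times> (real \<times> real \<times> real) \<Rightarrow> real" where
  "rnr_post_dens X y z =
     (case z of (d, a, b, (sa, sb, se)) \<Rightarrow>
        gauss_dens sa a * gauss_dens sb b *
        gauss_dens se (y - X *v d - (mat 1 - proj_X X) *v (sender_inc *v a)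
                         - (mat 1 - proj_X X) *v (receiver_inc *v b)))"

definition rnr_space :: "(real \<times> real \<times> real) measure \<Rightarrow>
   ((real^'p::finite) \<times> (real^'n::finite) \<times> (real^'n) \<times> (real \<times> real \<times> real)) measure" where
  "rnr_space nu = lborel \<Otimes>\<^sub>M (lborel \<Otimes>\<^sub>M (lborel \<Otimes>\<^sub>M nu))"

definition post_E ::
  "(real \<times> real \<times> real) measure \<Rightarrow> real^'p::finite^('n::finite\<times>'n) \<Rightarrow> real^('n\<times>'n) \<Rightarrow>
   ((real^'p) \<times> (real^'n) \<times> (real^'n) \<times> (real \<times> real \<times> real) \<Rightarrow> real) \<Rightarrow> real" where
  "post_E nu X y g =
     (\<integral>z. g z * rnr_post_dens X y z \<partial>rnr_space nu) / (\<integral>z. rnr_post_dens X y z \<partial>rnr_space nu)"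

end

theory Submission
  imports Defs "HOL-Probability.Distributions"
begin

text \<open>
  With \<open>c = (X\<^sup>T X)\<^sup>-\<^sup>1 X\<^sup>T y\<close>, the residual \<open>y - X\<delta> - (I - P\<^sub>X)(Aa + Bb)\<close> splits as
  \<open>X(c - \<delta>) + (I - P\<^sub>X)(y - Aa - Bb)\<close>, a sum of two orthogonal vectors. Hence the joint
  density factors into a part free of \<open>\<delta>\<close> times \<open>exp (-\<parallel>X(\<delta> - c)\<parallel>\<^sup>2 / (2\<sigma>\<^sub>\<epsilon>\<^sup>2))\<close>: given the
  other parameters, \<open>\<delta>\<close> is Gaussian with mean \<open>c\<close> and covariance \<open>\<sigma>\<^sub>\<epsilon>\<^sup>2 (X\<^sup>T X)\<^sup>-\<^sup>1\<close>.
  Integrating out the other parameters (Fubini) gives the posterior mean \<open>c\<close> and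
  covariance \<open>E[\<sigma>\<^sub>\<epsilon>\<^sup>2 | y] (X\<^sup>T X)\<^sup>-\<^sup>1\<close>. The Gaussian second moments are obtained by
  differentiating the moment generating function, computed by completing the square.
\<close>

lemma gram_matrix_inv:
  fixes X :: "real^'p::finite^'m::finite"
  assumes "rank X = CARD('p)"
  shows "(transpose X ** X) ** matrix_inv (transpose X ** X) = mat 1"
    and "matrix_inv (transpose X ** X) ** (transpose X ** X) = mat 1"
proof -
  let ?Q = "transpose X ** X"
  have injX: "inj ((*v) X)" using assms full_rank_injective by blast
  have "inj ((*v) ?Q)"
  proof (rule injI)
    fix u v assume "?Q *v u = ?Q *v v"
    then have "(u - v) \<bullet> (?Q *v (u - v)) = 0" by (simp add: matrix_vector_mult_diff_distrib)
    moreover have "(u - v) \<bullet> (?Q *v (u - v)) = (X *v (u - v)) \<bullet> (X *v (u - v))"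
      by (metis dot_lmul_matrix matrix_vector_mul_assoc vector_transpose_matrix)
    ultimately have "X *v (u - v) = X *v 0" by simp
    then show "u = v" using injX by (metis injD eq_iff_diff_eq_0)
  qed
  then obtain B where "B ** ?Q = mat 1" using matrix_left_invertible_injective by blast
  then have "?Q ** B = mat 1 \<and> B ** ?Q = mat 1" using matrix_left_right_inverse by blast
  then have "?Q ** matrix_inv ?Q = mat 1 \<and> matrix_inv ?Q ** ?Q = mat 1"
    unfolding matrix_inv_def by (rule someI)
  then show "?Q ** matrix_inv ?Q = mat 1" "matrix_inv ?Q ** ?Q = mat 1" by auto
qed

lemma gram_mult_matrix_inv_gram:
  fixes X :: "real^'p::finite^'m::finite"
  assumes "rank X = CARD('p)"
  shows "(transpose X ** X) *v (matrix_inv (transpose X ** X) *v u) = u"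
  by (simp add: matrix_vector_mul_assoc gram_matrix_inv(1)[OF assms])

lemma symmetric_matrix_inv_gram:
  fixes X :: "real^'p::finite^'m::finite"
  assumes "rank X = CARD('p)"
  shows "matrix_inv (transpose X ** X) $ l $ k = matrix_inv (transpose X ** X) $ k $ l"
proof -
  let ?Q = "transpose X ** X" let ?V = "matrix_inv ?Q"
  have "transpose ?Q = ?Q" by (simp add: matrix_transpose_mul)
  then have "transpose ?V ** ?Q = mat 1"
    using gram_matrix_inv(1)[OF assms] by (metis matrix_transpose_mul transpose_mat)
  then have "transpose ?V = ?V"
    by (metis matrix_mul_assoc matrix_mul_lid matrix_mul_rid gram_matrix_inv(1)[OF assms])
  then show ?thesis by (metis transpose_def vec_lambda_beta)
qed

lemma inner_matrix_vector_gram: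
  fixes X :: "real^'p::finite^'m::finite"
  shows "(X *v e) \<bullet> (X *v w) = e \<bullet> ((transpose X ** X) *v w)"
proof -
  have "(X *v e) \<bullet> (X *v w) = (e v* transpose X) \<bullet> (X *v w)" by simp
  also have "\<dots> = e \<bullet> (transpose X *v (X *v w))" by (rule dot_lmul_matrix)
  finally show ?thesis by (simp add: matrix_vector_mul_assoc)
qed

lemma full_rank_norm_sq_lower_bound:
  fixes X :: "real^'p::finite^'m::finite"
  assumes "rank X = CARD('p)"
  obtains \<mu> where "\<mu> > 0" "\<And>e. \<mu> * (norm e)\<^sup>2 \<le> (norm (X *v e))\<^sup>2"
proof -
  let ?T = "matrix_inv (transpose X ** X) ** transpose X"
  obtain B where B: "B > 0" "\<And>z. norm (?T *v z) \<le> B * norm z"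
    using linear_bounded_pos[of "\<lambda>z. ?T *v z"] by auto
  have "?T *v (X *v e) = e" for e
    by (simp add: matrix_vector_mul_assoc flip: matrix_mul_assoc add: gram_matrix_inv(2)[OF assms])
  then have "norm e \<le> B * norm (X *v e)" for e using B(2)[of "X *v e"] by simp
  then have "(norm e)\<^sup>2 \<le> (B * norm (X *v e))\<^sup>2" for e by (simp add: power_mono)
  then have "(1 / B\<^sup>2) * (norm e)\<^sup>2 \<le> (norm (X *v e))\<^sup>2" for e
    using B(1) by (simp add: field_simps power_mult_distrib)
  then show ?thesis using B(1) by (intro that[of "1 / B\<^sup>2"]) auto
qed

lemma matrix_vector_mult_uminus: "(A::real^'a::finite^'b::finite) *v (- e) = - (A *v e)"
  by (metis diff_0 matrix_vector_mult_diff_distrib matrix_vector_mult_0_right)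

lemma matrix_vector_mult_measurable[measurable]:
  "(\<lambda>x. (A::real^'a::finite^'b::finite) *v x) \<in> borel_measurable borel"
  by (intro borel_measurable_continuous_onI linear_continuous_on matrix_vector_mul_bounded_linear)

lemma vec_nth_measurable[measurable]: "(\<lambda>x::real^'a::finite. x $ k) \<in> borel_measurable borel"
  by (intro borel_measurable_continuous_onI linear_continuous_on bounded_linear_vec_nth)

lemma lborel_integrable_translate:
  fixes g :: "'a::euclidean_space \<Rightarrow> real"
  assumes "integrable lborel g"
  shows "integrable lborel (\<lambda>x. g (t + x))"
    and "(\<integral>x. g (t + x) \<partial>lborel) = (\<integral>x. g x \<partial>lborel)"
proof -
  have gm: "g \<in> borel_measurable borel" using assms by (simp add: borel_measurable_integrable)
  have pm: "(+) t \<in> measurable lborel borel" by simp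
  have "integrable (distr lborel borel ((+) t)) g" using assms by (simp add: lborel_distr_plus)
  then show "integrable lborel (\<lambda>x. g (t + x))" using integrable_distr_eq[OF pm gm] by simp
  have "(\<integral>x. g x \<partial>lborel) = (\<integral>x. g x \<partial>(distr lborel borel ((+) t)))"
    by (simp add: lborel_distr_plus)
  also have "\<dots> = (\<integral>x. g (t + x) \<partial>lborel)" by (rule integral_distr[OF pm gm])
  finally show "(\<integral>x. g (t + x) \<partial>lborel) = (\<integral>x. g x \<partial>lborel)" by simp
qed

lemma lborel_integral_odd_eq_0:
  fixes g :: "'a::euclidean_space \<Rightarrow> real"
  assumes gm: "g \<in> borel_measurable borel" and odd: "\<And>x. g (- x) = - g x"
  shows "(\<integral>x. g x \<partial>lborel) = 0"
proof -
  have pm: "uminus \<in> measurable lborel (borel::'a measure)" by simp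
  have "distr lborel borel uminus = (lborel :: 'a measure)"
    using lborel_affine[of "-1::real" "0::'a"] by (simp add: density_1)
  then have "(\<integral>x. g x \<partial>lborel) = (\<integral>x. g (- x) \<partial>lborel)"
    using integral_distr[OF pm gm] by simp
  then show ?thesis using odd by simp
qed

lemma integrable_exp_neg_norm_sq:
  fixes c :: real assumes "c > 0"
  shows "integrable lborel (\<lambda>x::'a::euclidean_space. exp (- c * (norm x)\<^sup>2))"
proof (rule integrableI_nonneg)
  show "(\<lambda>x::'a. exp (- c * (norm x)\<^sup>2)) \<in> borel_measurable lborel" by measurable
  show "AE x in lborel. 0 \<le> exp (- c * (norm (x::'a))\<^sup>2)" by simp
  have "integrable lborel (\<lambda>x::real. exp (- c * x\<^sup>2))"
  proof -
    define \<sigma> where "\<sigma> = sqrt (1 / (2 * c))"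
    have "exp (- c * x\<^sup>2) = sqrt (2 * pi * \<sigma>\<^sup>2) * normal_density 0 \<sigma> x" for x
      using assms by (simp add: normal_density_def \<sigma>_def field_simps)
    moreover have "integrable lborel (\<lambda>x. sqrt (2 * pi * \<sigma>\<^sup>2) * normal_density 0 \<sigma> x)"
      using assms by (intro integrable_mult_right integrable_normal_density) (simp add: \<sigma>_def)
    ultimately show ?thesis by simp
  qed
  then have fin: "(\<integral>\<^sup>+x. ennreal (exp (- c * x\<^sup>2)) \<partial>lborel) < \<infinity>"
    by (simp add: integrable_iff_bounded)
  have "exp (- c * (norm x)\<^sup>2) = (\<Prod>b\<in>Basis. exp (- c * (x \<bullet> b)\<^sup>2))" for x :: 'a
  proof -
    have "(norm x)\<^sup>2 = (\<Sum>b\<in>Basis. (x \<bullet> b)\<^sup>2)"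
      by (subst power2_norm_eq_inner) (simp add: euclidean_inner[of x x] power2_eq_square)
    then show ?thesis by (simp add: sum_distrib_left exp_sum)
  qed
  then have "(\<integral>\<^sup>+x. ennreal (exp (- c * (norm (x::'a))\<^sup>2)) \<partial>lborel)
      = (\<integral>\<^sup>+x. (\<Prod>b\<in>Basis. ennreal (exp (- c * ((x::'a) \<bullet> b)\<^sup>2))) \<partial>lborel)"
    by (simp add: prod_ennreal)
  also have "\<dots> = (\<Prod>b\<in>(Basis::'a set). (\<integral>\<^sup>+x. ennreal (exp (- c * x\<^sup>2)) \<partial>lborel))"
    by (rule nn_integral_lborel_prod) auto
  also have "\<dots> < \<infinity>"
    using fin by (simp add: top.not_eq_extremum[symmetric] power_eq_top_ennreal_iff)
  finally show "(\<integral>\<^sup>+x. ennreal (exp (- c * (norm (x::'a))\<^sup>2)) \<partial>lborel) < \<infinity>" .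
qed

section \<open>The Gaussian kernel with precision matrix \<open>X\<^sup>T X / s\<close>\<close>

definition gauss_kernel :: "real^'p::finite^'m::finite \<Rightarrow> real \<Rightarrow> real^'p \<Rightarrow> real" where
  "gauss_kernel X s e = exp (- ((norm (X *v e))\<^sup>2) / (2 * s))"

lemma gauss_kernel_measurable[measurable]: "gauss_kernel X s \<in> borel_measurable borel"
  unfolding gauss_kernel_def by measurable

lemma gauss_kernel_pos: "0 < gauss_kernel X s e"
  by (simp add: gauss_kernel_def)

lemma gauss_kernel_uminus: "gauss_kernel X s (- e) = gauss_kernel X s e"
  by (simp add: gauss_kernel_def matrix_vector_mult_uminus)

lemma mult_exp_neg_le:
  fixes a t :: real assumes "a > 0" "t \<ge> 0"
  shows "t * exp (- a * t) \<le> (2 / a) * exp (- (a / 2) * t)"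
proof -
  have "a * t / 2 \<le> exp (a * t / 2)" using exp_ge_add_one_self[of "a * t / 2"] by linarith
  then have "t \<le> (2 / a) * exp (a * t / 2)" using assms by (simp add: field_simps)
  then have "t * exp (- a * t) \<le> (2 / a) * exp (a * t / 2) * exp (- a * t)"
    by (rule mult_right_mono) simp
  also have "\<dots> = (2 / a) * exp (- (a / 2) * t)"
    by (simp add: mult.assoc flip: exp_add)
  finally show ?thesis .
qed

lemma integrable_quadratic_growth_mult_gauss_kernel:
  fixes X :: "real^'p::finite^'m::finite"
  assumes rk: "rank X = CARD('p)" and sp: "s > 0"
    and gm: "g \<in> borel_measurable borel" and gb: "\<And>e. \<bar>g e\<bar> \<le> A + B * (norm e)\<^sup>2"
  shows "integrable lborel (\<lambda>e. g e * gauss_kernel X s e)"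
proof -
  obtain \<mu> where mu: "\<mu> > 0" "\<And>e. \<mu> * (norm e)\<^sup>2 \<le> (norm (X *v e))\<^sup>2"
    using full_rank_norm_sq_lower_bound[OF rk] by blast
  define a where "a = \<mu> / (2 * s)"
  have a: "a > 0" using mu sp by (simp add: a_def)
  have kernel_le: "gauss_kernel X s e \<le> exp (- a * (norm e)\<^sup>2)" for e
  proof -
    have "- ((norm (X *v e))\<^sup>2) / (2 * s) \<le> - a * (norm e)\<^sup>2"
      using mu(2)[of e] sp by (simp add: a_def field_simps)
    then show ?thesis unfolding gauss_kernel_def by simp
  qed
  define w where "w e = (\<bar>A\<bar> + \<bar>B\<bar> * (2 / a)) * exp (- (a / 2) * (norm e)\<^sup>2)" for e :: "real^'p"
  have "integrable lborel w"
    unfolding w_def using a by (intro integrable_mult_right integrable_exp_neg_norm_sq) simp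
  then show ?thesis
  proof (rule Bochner_Integration.integrable_bound)
    show "(\<lambda>e. g e * gauss_kernel X s e) \<in> borel_measurable lborel" using gm by simp
    show "AE e in lborel. norm (g e * gauss_kernel X s e) \<le> norm (w e)"
    proof (rule AE_I2)
      fix e :: "real^'p"
      let ?t = "(norm e)\<^sup>2"
      have k0: "0 \<le> gauss_kernel X s e" using gauss_kernel_pos[of X s e] by simp
      have "norm (g e * gauss_kernel X s e) = \<bar>g e\<bar> * gauss_kernel X s e"
        using k0 by (simp add: abs_mult)
      also have "\<dots> \<le> (\<bar>A\<bar> + \<bar>B\<bar> * ?t) * exp (- a * ?t)"
      proof (rule mult_mono)
        show "\<bar>g e\<bar> \<le> \<bar>A\<bar> + \<bar>B\<bar> * ?t"
          using gb[of e] by (smt (verit) abs_ge_self mult_right_mono zero_le_power2)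
      qed (use kernel_le[of e] k0 in auto)
      also have "\<dots> = \<bar>A\<bar> * exp (- a * ?t) + \<bar>B\<bar> * (?t * exp (- a * ?t))"
        by (simp add: algebra_simps)
      also have "\<dots> \<le> \<bar>A\<bar> * exp (- (a / 2) * ?t) + \<bar>B\<bar> * ((2 / a) * exp (- (a / 2) * ?t))"
        using a mult_exp_neg_le[OF a, of ?t] by (intro add_mono mult_left_mono) auto
      also have "\<dots> = w e" by (simp add: w_def algebra_simps)
      also have "\<dots> \<le> norm (w e)" by simp
      finally show "norm (g e * gauss_kernel X s e) \<le> norm (w e)" .
    qed
  qed
qed

lemma integrable_gauss_kernel:
  fixes X :: "real^'p::finite^'m::finite"
  assumes "rank X = CARD('p)" "s > 0"
  shows "integrable lborel (gauss_kernel X s)"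
  using integrable_quadratic_growth_mult_gauss_kernel[OF assms, of "\<lambda>_. 1" 1 0] by simp

lemma integrable_affine_mult_gauss_kernel:
  fixes X :: "real^'p::finite^'m::finite"
  assumes "rank X = CARD('p)" "s > 0"
  shows "integrable lborel (\<lambda>e. (c + u \<bullet> e) * gauss_kernel X s e)"
proof (rule integrable_quadratic_growth_mult_gauss_kernel[OF assms])
  fix e :: "real^'p"
  have "\<bar>u \<bullet> e\<bar> \<le> norm u * norm e" by (rule Cauchy_Schwarz_ineq2)
  also have "\<dots> \<le> norm u * (1 + (norm e)\<^sup>2)"
  proof (intro mult_left_mono)
    have "0 \<le> (norm e - 1)\<^sup>2" by simp
    then have "2 * norm e \<le> 1 + (norm e)\<^sup>2" by (simp add: power2_eq_square algebra_simps)
    then show "norm e \<le> 1 + (norm e)\<^sup>2" using norm_ge_zero[of e] by linarith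
  qed simp
  finally show "\<bar>c + u \<bullet> e\<bar> \<le> (\<bar>c\<bar> + norm u) + norm u * (norm e)\<^sup>2"
    using abs_triangle_ineq[of c "u \<bullet> e"] by (simp add: algebra_simps)
qed simp

lemma integrable_quadratic_mult_gauss_kernel:
  fixes X :: "real^'p::finite^'m::finite"
  assumes "rank X = CARD('p)" "s > 0"
  shows "integrable lborel (\<lambda>e. (u \<bullet> e) * (w \<bullet> e) * gauss_kernel X s e)"
proof (rule integrable_quadratic_growth_mult_gauss_kernel[OF assms])
  fix e :: "real^'p"
  have "\<bar>(u \<bullet> e) * (w \<bullet> e)\<bar> \<le> (norm u * norm e) * (norm w * norm e)"
    unfolding abs_mult by (intro mult_mono Cauchy_Schwarz_ineq2) auto
  then show "\<bar>(u \<bullet> e) * (w \<bullet> e)\<bar> \<le> 0 + (norm u * norm w) * (norm e)\<^sup>2"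
    by (simp add: power2_eq_square algebra_simps)
qed simp

lemma integral_inner_mult_gauss_kernel:
  "(\<integral>e. (u \<bullet> e) * gauss_kernel X s e \<partial>lborel) = 0"
  by (rule lborel_integral_odd_eq_0) (simp_all add: gauss_kernel_uminus)

text \<open>Completing the square: tilting by \<open>exp (\<epsilon> (u \<bullet> e) / s)\<close> shifts the kernel by \<open>\<epsilon> V u\<close>.\<close>

lemma gauss_kernel_mult_exp_inner:
  fixes X :: "real^'p::finite^'m::finite"
  assumes rk: "rank X = CARD('p)" and sp: "s > 0"
  defines "V \<equiv> matrix_inv (transpose X ** X)"
  shows "gauss_kernel X s e * exp (\<epsilon> * (u \<bullet> e) / s)
       = exp (\<epsilon>\<^sup>2 * (u \<bullet> (V *v u)) / (2 * s)) * gauss_kernel X s (- (\<epsilon> *\<^sub>R (V *v u)) + e)"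
proof -
  let ?t = "\<epsilon> *\<^sub>R (V *v u)"
  let ?r = "u \<bullet> (V *v u)"
  have c1: "(X *v e) \<bullet> (X *v ?t) = \<epsilon> * (u \<bullet> e)"
    by (simp add: matrix_vector_mult_scaleR inner_matrix_vector_gram V_def
        gram_mult_matrix_inv_gram[OF rk] inner_commute)
  have c2: "(X *v ?t) \<bullet> (X *v ?t) = \<epsilon>\<^sup>2 * ?r"
    by (simp add: matrix_vector_mult_scaleR inner_matrix_vector_gram V_def
        gram_mult_matrix_inv_gram[OF rk] inner_commute power2_eq_square)
  have "(norm (X *v (- ?t + e)))\<^sup>2 = (norm (X *v e - X *v ?t))\<^sup>2"
    by (simp add: matrix_vector_mult_diff_distrib[symmetric])
  also have "\<dots> = (norm (X *v e))\<^sup>2 - 2 * (\<epsilon> * (u \<bullet> e)) + \<epsilon>\<^sup>2 * ?r"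
    unfolding power2_norm_eq_inner
    by (simp add: inner_diff_left inner_diff_right inner_commute c1 c2)
  finally have "- ((norm (X *v e))\<^sup>2) / (2 * s) + \<epsilon> * (u \<bullet> e) / s
      = \<epsilon>\<^sup>2 * ?r / (2 * s) + - ((norm (X *v (- ?t + e)))\<^sup>2) / (2 * s)"
    using sp by (simp add: field_simps)
  then show ?thesis unfolding gauss_kernel_def by (simp flip: exp_add)
qed

lemma integrable_gauss_kernel_mult_exp_inner:
  fixes X :: "real^'p::finite^'m::finite"
  assumes "rank X = CARD('p)" "s > 0"
  shows "integrable lborel (\<lambda>e. gauss_kernel X s e * exp (\<epsilon> * (u \<bullet> e) / s))"
  unfolding gauss_kernel_mult_exp_inner[OF assms]
  by (intro integrable_mult_right lborel_integrable_translate(1) integrable_gauss_kernel[OF assms])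

lemma tilted_first_moment_gauss_kernel:
  fixes X :: "real^'p::finite^'m::finite"
  assumes rk: "rank X = CARD('p)" and sp: "s > 0"
  defines "V \<equiv> matrix_inv (transpose X ** X)"
  shows "integrable lborel (\<lambda>e. (u \<bullet> e) * (gauss_kernel X s e * exp (\<epsilon> * (u \<bullet> e) / s)))"
    and "(\<integral>e. (u \<bullet> e) * (gauss_kernel X s e * exp (\<epsilon> * (u \<bullet> e) / s)) \<partial>lborel)
         = exp (\<epsilon>\<^sup>2 * (u \<bullet> (V *v u)) / (2 * s)) * (\<epsilon> * (u \<bullet> (V *v u)))
           * (\<integral>e. gauss_kernel X s e \<partial>lborel)"
proof -
  let ?t = "\<epsilon> *\<^sub>R (V *v u)"
  let ?E = "exp (\<epsilon>\<^sup>2 * (u \<bullet> (V *v u)) / (2 * s))"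
  define g where "g e = (u \<bullet> ?t + u \<bullet> e) * gauss_kernel X s e" for e
  have gi: "integrable lborel g"
    unfolding g_def by (rule integrable_affine_mult_gauss_kernel[OF rk sp])
  have eq: "(u \<bullet> e) * (gauss_kernel X s e * exp (\<epsilon> * (u \<bullet> e) / s)) = ?E * g (- ?t + e)" for e
    unfolding gauss_kernel_mult_exp_inner[OF rk sp] g_def V_def
    by (simp add: inner_add_right inner_minus_right inner_diff_right)
  show "integrable lborel (\<lambda>e. (u \<bullet> e) * (gauss_kernel X s e * exp (\<epsilon> * (u \<bullet> e) / s)))"
    unfolding eq by (intro integrable_mult_right lborel_integrable_translate(1) gi)
  have "(\<integral>e. (u \<bullet> e) * (gauss_kernel X s e * exp (\<epsilon> * (u \<bullet> e) / s)) \<partial>lborel)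
      = ?E * (\<integral>e. g (- ?t + e) \<partial>lborel)"
    unfolding eq by simp
  also have "(\<integral>e. g (- ?t + e) \<partial>lborel) = (\<integral>e. g e \<partial>lborel)"
    by (rule lborel_integrable_translate(2)[OF gi])
  also have "\<dots> = (u \<bullet> ?t) * (\<integral>e. gauss_kernel X s e \<partial>lborel)
                    + (\<integral>e. (u \<bullet> e) * gauss_kernel X s e \<partial>lborel)"
    unfolding g_def distrib_right
    using integrable_gauss_kernel[OF rk sp] integrable_affine_mult_gauss_kernel[OF rk sp, of 0 u]
    by simp
  finally show "(\<integral>e. (u \<bullet> e) * (gauss_kernel X s e * exp (\<epsilon> * (u \<bullet> e) / s)) \<partial>lborel)
         = ?E * (\<epsilon> * (u \<bullet> (V *v u))) * (\<integral>e. gauss_kernel X s e \<partial>lborel)"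
    by (simp add: integral_inner_mult_gauss_kernel)
qed

lemma abs_exp_minus_1_le: "\<bar>exp y - 1\<bar> \<le> \<bar>y\<bar> * exp \<bar>y\<bar>" for y :: real
proof (cases "y \<ge> 0")
  case True
  have "(1 - y) * exp y \<le> exp (- y) * exp y"
    using exp_ge_add_one_self[of "- y"] by (intro mult_right_mono) auto
  then show ?thesis using True by (simp add: algebra_simps flip: exp_add)
next
  case False
  have "\<bar>y\<bar> \<le> \<bar>y\<bar> * exp \<bar>y\<bar>" by (simp add: mult_le_cancel_left1)
  moreover have "\<bar>exp y - 1\<bar> = 1 - exp y" "\<bar>y\<bar> = - y" using False by auto
  ultimately show ?thesis using exp_ge_add_one_self[of y] by linarith
qed

lemma power2_le_4_exp_abs: "z\<^sup>2 \<le> 4 * exp \<bar>z\<bar>" for z :: real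
proof -
  have "\<bar>z\<bar> / 2 \<le> exp (\<bar>z\<bar> / 2)" using exp_ge_add_one_self[of "\<bar>z\<bar> / 2"] by linarith
  then have "(\<bar>z\<bar> / 2)\<^sup>2 \<le> (exp (\<bar>z\<bar> / 2))\<^sup>2" by (intro power_mono) auto
  also have "(exp (\<bar>z\<bar> / 2))\<^sup>2 = exp \<bar>z\<bar>" by (simp add: power2_eq_square flip: exp_add)
  finally show ?thesis by (simp add: power_divide)
qed

lemma abs_mult_exp_difference_quotient_le:
  fixes x s \<epsilon> :: real
  assumes "s > 0" "0 < \<epsilon>" "\<epsilon> \<le> 1"
  shows "\<bar>x * ((exp (\<epsilon> * x / s) - 1) / \<epsilon>)\<bar> \<le> 4 * s * (exp (2 * x / s) + exp ((-2) * x / s))"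
proof -
  define z where "z = x / s"
  have xz: "x = s * z" using assms(1) by (simp add: z_def)
  have "\<bar>exp (\<epsilon> * z) - 1\<bar> \<le> \<bar>\<epsilon> * z\<bar> * exp \<bar>\<epsilon> * z\<bar>" by (rule abs_exp_minus_1_le)
  also have "\<dots> \<le> \<epsilon> * \<bar>z\<bar> * exp \<bar>z\<bar>"
    using assms by (intro mult_mono) (auto simp: abs_mult mult_left_le_one_le)
  finally have e1: "\<bar>exp (\<epsilon> * x / s) - 1\<bar> \<le> \<epsilon> * \<bar>z\<bar> * exp \<bar>z\<bar>" by (simp add: z_def)
  have "\<bar>x * ((exp (\<epsilon> * x / s) - 1) / \<epsilon>)\<bar> = \<bar>x\<bar> * \<bar>exp (\<epsilon> * x / s) - 1\<bar> / \<epsilon>"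
    using assms by (simp add: abs_mult)
  also have "\<dots> \<le> \<bar>x\<bar> * (\<epsilon> * \<bar>z\<bar> * exp \<bar>z\<bar>) / \<epsilon>"
    using assms e1 by (intro divide_right_mono mult_left_mono) auto
  also have "\<dots> = s * (z\<^sup>2 * exp \<bar>z\<bar>)"
    using assms by (simp add: xz abs_mult power2_eq_square)
  also have "\<dots> \<le> s * (4 * exp \<bar>z\<bar> * exp \<bar>z\<bar>)"
    using assms power2_le_4_exp_abs[of z] by (intro mult_left_mono mult_right_mono) auto
  also have "\<dots> = 4 * s * exp (2 * \<bar>z\<bar>)" by (simp flip: exp_add)
  also have "exp (2 * \<bar>z\<bar>) \<le> exp (2 * x / s) + exp ((-2) * x / s)"
    by (cases "z \<ge> 0") (auto simp: z_def abs_if)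
  finally show ?thesis using assms by simp
qed

lemma exp_difference_quotient_LIMSEQ:
  "(\<lambda>n. (exp (inverse (real (Suc n)) * c) - 1) / inverse (real (Suc n))) \<longlonglongrightarrow> c"
proof -
  have "((\<lambda>h. exp (h * c)) has_field_derivative c) (at 0)"
    by (auto intro!: derivative_eq_intros)
  then have "((\<lambda>h. (exp (h * c) - 1) / h) \<longlongrightarrow> c) (at 0)"
    using DERIV_D by fastforce
  then show ?thesis
    by (rule tendsto_compose_eventually[OF _ LIMSEQ_inverse_real_of_nat]) simp
qed

text \<open>
  The tilted first moment \<open>M(\<epsilon>) = \<integral> (u \<bullet> e) k(e) exp (\<epsilon> (u \<bullet> e) / s) de\<close> is known in closed
  form; its derivative at \<open>0\<close>, taken under the integral sign by dominated convergence, is the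
  second moment divided by \<open>s\<close>.
\<close>

lemma gauss_kernel_difference_quotient_LIMSEQ:
  fixes X :: "real^'p::finite^'m::finite"
  assumes rk: "rank X = CARD('p)" and sp: "s > 0"
  defines "\<epsilon> \<equiv> \<lambda>n. inverse (real (Suc n))"
  shows "(\<lambda>n. \<integral>e. (u \<bullet> e) * gauss_kernel X s e * ((exp (\<epsilon> n * (u \<bullet> e) / s) - 1) / \<epsilon> n) \<partial>lborel)
      \<longlonglongrightarrow> (\<integral>e. (u \<bullet> e) * (u \<bullet> e) * gauss_kernel X s e / s \<partial>lborel)"
proof (rule integral_dominated_convergence)
  have \<epsilon>: "0 < \<epsilon> n" "\<epsilon> n \<le> 1" for n by (auto simp: \<epsilon>_def field_simps)
  let ?W = "\<lambda>e. 4 * s * (gauss_kernel X s e * exp (2 * (u \<bullet> e) / s)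
                          + gauss_kernel X s e * exp ((-2) * (u \<bullet> e) / s))"
  show "integrable lborel ?W"
    by (intro integrable_mult_right Bochner_Integration.integrable_add
        integrable_gauss_kernel_mult_exp_inner[OF rk sp])
  show "AE e in lborel. (\<lambda>n. (u \<bullet> e) * gauss_kernel X s e * ((exp (\<epsilon> n * (u \<bullet> e) / s) - 1) / \<epsilon> n))
      \<longlonglongrightarrow> (u \<bullet> e) * (u \<bullet> e) * gauss_kernel X s e / s"
  proof (rule AE_I2)
    fix e :: "real^'p"
    show "(\<lambda>n. (u \<bullet> e) * gauss_kernel X s e * ((exp (\<epsilon> n * (u \<bullet> e) / s) - 1) / \<epsilon> n))
        \<longlonglongrightarrow> (u \<bullet> e) * (u \<bullet> e) * gauss_kernel X s e / s"
      using tendsto_mult_left[OF exp_difference_quotient_LIMSEQ[of "(u \<bullet> e) / s"],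
          of "(u \<bullet> e) * gauss_kernel X s e"]
      unfolding \<epsilon>_def by (simp add: ac_simps)
  qed
  show "AE e in lborel. norm ((u \<bullet> e) * gauss_kernel X s e * ((exp (\<epsilon> n * (u \<bullet> e) / s) - 1) / \<epsilon> n))
      \<le> ?W e" for n
  proof (rule AE_I2)
    fix e :: "real^'p"
    have "norm ((u \<bullet> e) * gauss_kernel X s e * ((exp (\<epsilon> n * (u \<bullet> e) / s) - 1) / \<epsilon> n))
        = gauss_kernel X s e * \<bar>(u \<bullet> e) * ((exp (\<epsilon> n * (u \<bullet> e) / s) - 1) / \<epsilon> n)\<bar>"
      using gauss_kernel_pos[of X s e] by (simp add: abs_mult)
    also have "\<dots> \<le> gauss_kernel X s e * (4 * s * (exp (2 * (u \<bullet> e) / s) + exp ((-2) * (u \<bullet> e) / s)))"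
      using abs_mult_exp_difference_quotient_le[OF sp \<epsilon>(1,2)] gauss_kernel_pos[of X s e]
      by (intro mult_left_mono) auto
    also have "\<dots> = ?W e" by (simp add: algebra_simps)
    finally show "norm ((u \<bullet> e) * gauss_kernel X s e * ((exp (\<epsilon> n * (u \<bullet> e) / s) - 1) / \<epsilon> n))
        \<le> ?W e" .
  qed
qed simp_all

lemma integral_inner_sq_mult_gauss_kernel:
  fixes X :: "real^'p::finite^'m::finite"
  assumes rk: "rank X = CARD('p)" and sp: "s > 0"
  defines "V \<equiv> matrix_inv (transpose X ** X)"
  shows "(\<integral>e. (u \<bullet> e) * (u \<bullet> e) * gauss_kernel X s e \<partial>lborel)
       = s * (u \<bullet> (V *v u)) * (\<integral>e. gauss_kernel X s e \<partial>lborel)"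
proof -
  let ?r = "u \<bullet> (V *v u)"
  let ?Z = "\<integral>e. gauss_kernel X s e \<partial>lborel"
  define \<epsilon> where "\<epsilon> = (\<lambda>n. inverse (real (Suc n)))"
  define S where "S n e = (u \<bullet> e) * gauss_kernel X s e * ((exp (\<epsilon> n * (u \<bullet> e) / s) - 1) / \<epsilon> n)"
    for n e
  have "S n = (\<lambda>e. ((u \<bullet> e) * (gauss_kernel X s e * exp (\<epsilon> n * (u \<bullet> e) / s))
                    - (u \<bullet> e) * gauss_kernel X s e) / \<epsilon> n)" for n
    by (auto simp: S_def algebra_simps diff_divide_distrib)
  then have int_S: "(\<integral>e. S n e \<partial>lborel) = exp ((\<epsilon> n)\<^sup>2 * ?r / (2 * s)) * ?r * ?Z" for n
    using tilted_first_moment_gauss_kernel[OF rk sp]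
      integrable_affine_mult_gauss_kernel[OF rk sp, of 0 u]
    by (simp add: integral_inner_mult_gauss_kernel V_def \<epsilon>_def)
  have "(\<lambda>n. exp ((\<epsilon> n)\<^sup>2 * ?r / (2 * s)) * ?r * ?Z) \<longlonglongrightarrow> exp (0\<^sup>2 * ?r / (2 * s)) * ?r * ?Z"
    unfolding \<epsilon>_def using sp by (intro tendsto_intros LIMSEQ_inverse_real_of_nat) auto
  then have "(\<lambda>n. \<integral>e. S n e \<partial>lborel) \<longlonglongrightarrow> ?r * ?Z"
    unfolding int_S by simp
  moreover have "(\<lambda>n. \<integral>e. S n e \<partial>lborel)
      \<longlonglongrightarrow> (\<integral>e. (u \<bullet> e) * (u \<bullet> e) * gauss_kernel X s e / s \<partial>lborel)"
    unfolding S_def \<epsilon>_def by (rule gauss_kernel_difference_quotient_LIMSEQ[OF rk sp])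
  ultimately have "(\<integral>e. (u \<bullet> e) * (u \<bullet> e) * gauss_kernel X s e / s \<partial>lborel) = ?r * ?Z"
    by (rule LIMSEQ_unique[rotated])
  then show ?thesis using sp by (simp add: field_simps)
qed

lemma integral_component_mult_gauss_kernel:
  fixes X :: "real^'p::finite^'m::finite"
  assumes rk: "rank X = CARD('p)" and sp: "s > 0"
  shows "(\<integral>e. e $ k * e $ l * gauss_kernel X s e \<partial>lborel)
       = s * matrix_inv (transpose X ** X) $ k $ l * (\<integral>e. gauss_kernel X s e \<partial>lborel)"
proof -
  let ?V = "matrix_inv (transpose X ** X)"
  let ?K = "gauss_kernel X s"
  let ?a = "axis k (1::real)" let ?b = "axis l (1::real)"
  have axis_inner: "axis i (1::real) \<bullet> e = e $ i" for i e by (simp add: inner_axis')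
  have axis_mult: "(?V *v axis j (1::real)) $ i = ?V $ i $ j" for i j
    by (simp add: matrix_vector_mult_def axis_def if_distrib cong: if_cong)
  have polarisation: "e $ k * e $ l * ?K e = (((?a + ?b) \<bullet> e) * ((?a + ?b) \<bullet> e) * ?K e
          - (?a \<bullet> e) * (?a \<bullet> e) * ?K e - (?b \<bullet> e) * (?b \<bullet> e) * ?K e) / 2" for e
    by (simp add: inner_add_left axis_inner algebra_simps)
  have "(\<integral>e. e $ k * e $ l * ?K e \<partial>lborel)
      = ((\<integral>e. ((?a + ?b) \<bullet> e) * ((?a + ?b) \<bullet> e) * ?K e \<partial>lborel)
         - (\<integral>e. (?a \<bullet> e) * (?a \<bullet> e) * ?K e \<partial>lborel) - (\<integral>e. (?b \<bullet> e) * (?b \<bullet> e) * ?K e \<partial>lborel)) / 2"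
    unfolding polarisation using integrable_quadratic_mult_gauss_kernel[OF rk sp] by simp
  also have "\<dots> = s * (\<integral>e. ?K e \<partial>lborel)
      * ((?a + ?b) \<bullet> (?V *v (?a + ?b)) - ?a \<bullet> (?V *v ?a) - ?b \<bullet> (?V *v ?b)) / 2"
    unfolding integral_inner_sq_mult_gauss_kernel[OF rk sp] by (simp add: algebra_simps)
  also have "(?a + ?b) \<bullet> (?V *v (?a + ?b)) - ?a \<bullet> (?V *v ?a) - ?b \<bullet> (?V *v ?b) = ?V $ k $ l + ?V $ l $ k"
    by (simp add: matrix_vector_right_distrib inner_add_left inner_add_right axis_inner axis_mult)
  finally show ?thesis using symmetric_matrix_inv_gram[OF rk, of l k] by simp
qed

lemma gauss_kernel_centred_moments:
  fixes X :: "real^'p::finite^'m::finite"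
  assumes rk: "rank X = CARD('p)" and sp: "s > 0"
  defines "Z \<equiv> \<integral>e. gauss_kernel X s e \<partial>lborel"
  shows "integrable lborel (\<lambda>d. gauss_kernel X s (d - c))"
    and "(\<integral>d. gauss_kernel X s (d - c) \<partial>lborel) = Z"
    and "integrable lborel (\<lambda>d. d $ k * gauss_kernel X s (d - c))"
    and "(\<integral>d. d $ k * gauss_kernel X s (d - c) \<partial>lborel) = c $ k * Z"
    and "integrable lborel (\<lambda>d. d $ k * d $ l * gauss_kernel X s (d - c))"
    and "(\<integral>d. d $ k * d $ l * gauss_kernel X s (d - c) \<partial>lborel)
         = (c $ k * c $ l + s * matrix_inv (transpose X ** X) $ k $ l) * Z"
proof -
  let ?K = "gauss_kernel X s"
  let ?a = "axis k (1::real)" let ?b = "axis l (1::real)"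
  have axis_inner: "axis i (1::real) \<bullet> e = e $ i" for i e by (simp add: inner_axis')
  have centre: "integrable lborel (\<lambda>d. \<phi> d * ?K (d - c))"
      "(\<integral>d. \<phi> d * ?K (d - c) \<partial>lborel) = (\<integral>e. \<phi> (c + e) * ?K e \<partial>lborel)"
    if "integrable lborel (\<lambda>e. \<phi> (c + e) * ?K e)" for \<phi> :: "real^'p \<Rightarrow> real"
    using lborel_integrable_translate[OF that, of "- c"] by (simp_all add: algebra_simps)
  have i0: "integrable lborel ?K" by (rule integrable_gauss_kernel[OF rk sp])
  have ia: "integrable lborel (\<lambda>e. (?a \<bullet> e) * ?K e)"
    and ib: "integrable lborel (\<lambda>e. (?b \<bullet> e) * ?K e)"
    using integrable_affine_mult_gauss_kernel[OF rk sp, of 0] by simp_all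
  have iab: "integrable lborel (\<lambda>e. e $ k * e $ l * ?K e)"
    using integrable_quadratic_mult_gauss_kernel[OF rk sp, of ?a ?b] by (simp add: axis_inner)
  have lin: "(c + e) $ k * ?K e = c $ k * ?K e + (?a \<bullet> e) * ?K e" for e
    by (simp add: axis_inner algebra_simps)
  have quad: "(c + e) $ k * (c + e) $ l * ?K e
     = c $ k * c $ l * ?K e + c $ k * ((?b \<bullet> e) * ?K e) + c $ l * ((?a \<bullet> e) * ?K e)
       + e $ k * e $ l * ?K e" for e
    by (simp add: axis_inner algebra_simps)
  show "integrable lborel (\<lambda>d. ?K (d - c))"
    and "(\<integral>d. ?K (d - c) \<partial>lborel) = Z"
    using centre[of "\<lambda>_. 1"] i0 by (simp_all add: Z_def)
  have i1: "integrable lborel (\<lambda>e. (c + e) $ k * ?K e)" unfolding lin using i0 ia by simp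
  show "integrable lborel (\<lambda>d. d $ k * ?K (d - c))" using centre(1)[of "\<lambda>d. d $ k", OF i1] .
  have "(\<integral>d. d $ k * ?K (d - c) \<partial>lborel) = (\<integral>e. c $ k * ?K e + (?a \<bullet> e) * ?K e \<partial>lborel)"
    using centre(2)[of "\<lambda>d. d $ k", OF i1] unfolding lin .
  then show "(\<integral>d. d $ k * ?K (d - c) \<partial>lborel) = c $ k * Z"
    using i0 ia by (simp add: integral_inner_mult_gauss_kernel Z_def)
  have i2: "integrable lborel (\<lambda>e. (c + e) $ k * (c + e) $ l * ?K e)"
    unfolding quad using i0 ia ib iab by simp
  show "integrable lborel (\<lambda>d. d $ k * d $ l * ?K (d - c))"
    using centre(1)[of "\<lambda>d. d $ k * d $ l", OF i2] .
  have "(\<integral>d. d $ k * d $ l * ?K (d - c) \<partial>lborel)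
      = (\<integral>e. c $ k * c $ l * ?K e + c $ k * ((?b \<bullet> e) * ?K e) + c $ l * ((?a \<bullet> e) * ?K e)
             + e $ k * e $ l * ?K e \<partial>lborel)"
    using centre(2)[of "\<lambda>d. d $ k * d $ l", OF i2] unfolding quad .
  then show "(\<integral>d. d $ k * d $ l * ?K (d - c) \<partial>lborel)
         = (c $ k * c $ l + s * matrix_inv (transpose X ** X) $ k $ l) * Z"
    using i0 ia ib iab
    by (simp add: integral_inner_mult_gauss_kernel integral_component_mult_gauss_kernel[OF rk sp] Z_def)
      (simp add: algebra_simps)
qed

section \<open>Fiberwise integration on product measures\<close>

lemma (in pair_sigma_finite) integrable_pair_measure_nonneg_fiberwise:
  fixes F :: "_ \<Rightarrow> real"
  assumes F[measurable]: "F \<in> borel_measurable (M1 \<Otimes>\<^sub>M M2)" and nonneg: "\<And>z. 0 \<le> F z"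
    and fiber: "AE y in M2. integrable M1 (\<lambda>x. F (x, y)) \<and> (\<integral>x. F (x, y) \<partial>M1) = B y"
    and B: "integrable M2 B"
  shows "integrable (M1 \<Otimes>\<^sub>M M2) F"
proof (rule integrableI_nonneg)
  have "(\<integral>\<^sup>+z. ennreal (F z) \<partial>(M1 \<Otimes>\<^sub>M M2)) = (\<integral>\<^sup>+y. (\<integral>\<^sup>+x. ennreal (F (x, y)) \<partial>M1) \<partial>M2)"
    by (rule nn_integral_snd[symmetric]) measurable
  also have "\<dots> = (\<integral>\<^sup>+y. ennreal (B y) \<partial>M2)"
    using fiber
  proof (intro nn_integral_cong_AE, eventually_elim)
    case (elim y)
    then show ?case using nonneg by (subst nn_integral_eq_integral) auto
  qed
  also have "\<dots> \<le> (\<integral>\<^sup>+y. ennreal (norm (B y)) \<partial>M2)"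
    by (intro nn_integral_mono ennreal_leI) simp
  also have "\<dots> < \<infinity>" using B by (simp add: integrable_iff_bounded)
  finally show "(\<integral>\<^sup>+z. ennreal (F z) \<partial>(M1 \<Otimes>\<^sub>M M2)) < \<infinity>" .
qed (use nonneg in simp_all)

lemma (in pair_sigma_finite) integral_pair_measure_fiberwise:
  fixes F :: "_ \<Rightarrow> real"
  assumes F: "integrable (M1 \<Otimes>\<^sub>M M2) F" and H: "H \<in> borel_measurable M2"
    and fiber: "AE y in M2. (\<integral>x. F (x, y) \<partial>M1) = H y"
  shows "integral\<^sup>L (M1 \<Otimes>\<^sub>M M2) F = (\<integral>y. H y \<partial>M2)"
proof -
  have F': "integrable (M1 \<Otimes>\<^sub>M M2) (case_prod (\<lambda>x y. F (x, y)))" using F by simp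
  have "integral\<^sup>L (M1 \<Otimes>\<^sub>M M2) F = (\<integral>y. (\<integral>x. F (x, y) \<partial>M1) \<partial>M2)"
    using integral_snd[OF F'] by simp
  also have "\<dots> = (\<integral>y. H y \<partial>M2)"
    using integrable_snd[OF F'] H fiber by (intro integral_cong_AE) (auto dest: borel_measurable_integrable)
  finally show ?thesis .
qed

lemma abs_le_one_plus_square: "\<bar>x\<bar> \<le> 1 + x * x" for x :: real
proof -
  have "0 \<le> (\<bar>x\<bar> - 1)\<^sup>2" by simp
  then have "2 * \<bar>x\<bar> \<le> 1 + x * x" by (simp add: power2_eq_square algebra_simps abs_mult_self_eq)
  then show ?thesis by linarith
qed

lemma abs_mult_le_sum_squares: "\<bar>x * y\<bar> \<le> x * x + y * y" for x y :: real
proof -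
  have "0 \<le> (\<bar>x\<bar> - \<bar>y\<bar>)\<^sup>2" by simp
  then have "2 * \<bar>x * y\<bar> \<le> x * x + y * y"
    by (simp add: power2_eq_square algebra_simps abs_mult abs_mult_self_eq)
  then show ?thesis by linarith
qed

lemma integrable_moments_from_second_moments:
  fixes D f g :: "'a \<Rightarrow> real"
  assumes D: "\<And>z. 0 \<le> D z" "integrable M D"
    and [measurable]: "f \<in> borel_measurable M" "g \<in> borel_measurable M"
    and f: "integrable M (\<lambda>z. f z * f z * D z)" and g: "integrable M (\<lambda>z. g z * g z * D z)"
  shows "integrable M (\<lambda>z. f z * D z)" and "integrable M (\<lambda>z. f z * g z * D z)"
proof -
  have [measurable]: "D \<in> borel_measurable M" using D(2) by (rule borel_measurable_integrable)
  show "integrable M (\<lambda>z. f z * D z)"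
  proof (rule Bochner_Integration.integrable_bound)
    show "integrable M (\<lambda>z. D z + f z * f z * D z)" using D f by simp
    show "AE z in M. norm (f z * D z) \<le> norm (D z + f z * f z * D z)"
    proof (rule AE_I2)
      fix z
      have "norm (f z * D z) = \<bar>f z\<bar> * D z" using D(1)[of z] by (simp add: abs_mult)
      also have "\<dots> \<le> (1 + f z * f z) * D z"
        using D(1)[of z] abs_le_one_plus_square by (rule mult_right_mono[rotated])
      also have "\<dots> \<le> norm (D z + f z * f z * D z)"
        by (simp only: distrib_right mult_1_left real_norm_def abs_ge_self)
      finally show "norm (f z * D z) \<le> norm (D z + f z * f z * D z)" .
    qed
  qed measurable
  show "integrable M (\<lambda>z. f z * g z * D z)"
  proof (rule Bochner_Integration.integrable_bound)
    show "integrable M (\<lambda>z. f z * f z * D z + g z * g z * D z)" using f g by simp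
    show "AE z in M. norm (f z * g z * D z) \<le> norm (f z * f z * D z + g z * g z * D z)"
    proof (rule AE_I2)
      fix z
      have "norm (f z * g z * D z) = \<bar>f z * g z\<bar> * D z" using D(1)[of z] by (simp add: abs_mult)
      also have "\<dots> \<le> (f z * f z + g z * g z) * D z"
        using D(1)[of z] abs_mult_le_sum_squares by (rule mult_right_mono[rotated])
      also have "\<dots> \<le> norm (f z * f z * D z + g z * g z * D z)"
        by (simp only: distrib_right real_norm_def abs_ge_self)
      finally show "norm (f z * g z * D z) \<le> norm (f z * f z * D z + g z * g z * D z)" .
    qed
  qed measurable
qed

section \<open>Moments of a scale mixture of Gaussian kernels\<close>

lemma gauss_kernel_scaled_moments:
  fixes X :: "real^'p::finite^'m::finite" and G :: real and c :: "real^'p"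
  assumes rk: "rank X = CARD('p)" and sp: "s > 0"
  defines "f \<equiv> \<lambda>d. G * gauss_kernel X s (d - c)"
  shows "integrable lborel (\<lambda>d. d $ k * f d)"
    and "(\<integral>d. d $ k * f d \<partial>lborel) = c $ k * (\<integral>d. f d \<partial>lborel)"
    and "integrable lborel (\<lambda>d. d $ k * d $ l * f d)"
    and "(\<integral>d. d $ k * d $ l * f d \<partial>lborel)
         = c $ k * c $ l * (\<integral>d. f d \<partial>lborel)
           + matrix_inv (transpose X ** X) $ k $ l * (s * (\<integral>d. f d \<partial>lborel))"
proof -
  note m = gauss_kernel_centred_moments[OF rk sp, where c = c]
  let ?K = "\<lambda>d. gauss_kernel X s (d - c)"
  have mass: "(\<integral>d. f d \<partial>lborel) = G * (\<integral>e. gauss_kernel X s e \<partial>lborel)"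
    unfolding f_def integral_mult_right_zero m(2) ..
  have e1: "(\<lambda>d. d $ k * f d) = (\<lambda>d. G * (d $ k * ?K d))" for k
    by (simp add: f_def mult_ac)
  have e2: "(\<lambda>d. d $ k * d $ l * f d) = (\<lambda>d. G * (d $ k * d $ l * ?K d))" for k l
    by (simp add: f_def mult_ac)
  show "integrable lborel (\<lambda>d. d $ k * f d)" unfolding e1 using m(3) by simp
  show "(\<integral>d. d $ k * f d \<partial>lborel) = c $ k * (\<integral>d. f d \<partial>lborel)"
    unfolding e1 integral_mult_right_zero m(4) mass by simp
  show "integrable lborel (\<lambda>d. d $ k * d $ l * f d)" unfolding e2 using m(5) by simp
  show "(\<integral>d. d $ k * d $ l * f d \<partial>lborel)
      = c $ k * c $ l * (\<integral>d. f d \<partial>lborel)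
        + matrix_inv (transpose X ** X) $ k $ l * (s * (\<integral>d. f d \<partial>lborel))"
    unfolding e2 integral_mult_right_zero m(6) mass by (simp add: algebra_simps)
qed

lemma gauss_kernel_mixture_moments:
  fixes X :: "real^'p::finite^'m::finite" and R :: "'w measure" and G s :: "'w \<Rightarrow> real"
  assumes rk: "rank X = CARD('p)" and R: "sigma_finite_measure R"
    and D: "\<And>d w. D (d, w) = G w * gauss_kernel X (s w) (d - c)"
    and G: "\<And>w. 0 \<le> G w" and s: "AE w in R. 0 < s w"
    and int_D: "integrable (lborel \<Otimes>\<^sub>M R) D"
    and int_sD: "integrable (lborel \<Otimes>\<^sub>M R) (\<lambda>z. s (snd z) * D z)"
  defines "V \<equiv> matrix_inv (transpose X ** X)"
  shows "integrable (lborel \<Otimes>\<^sub>M R) (\<lambda>z. fst z $ k * D z)"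
    and "(\<integral>z. fst z $ k * D z \<partial>(lborel \<Otimes>\<^sub>M R)) = c $ k * (\<integral>z. D z \<partial>(lborel \<Otimes>\<^sub>M R))"
    and "integrable (lborel \<Otimes>\<^sub>M R) (\<lambda>z. fst z $ k * fst z $ l * D z)"
    and "(\<integral>z. fst z $ k * fst z $ l * D z \<partial>(lborel \<Otimes>\<^sub>M R))
         = c $ k * c $ l * (\<integral>z. D z \<partial>(lborel \<Otimes>\<^sub>M R))
           + V $ k $ l * (\<integral>z. s (snd z) * D z \<partial>(lborel \<Otimes>\<^sub>M R))"
proof -
  interpret P: pair_sigma_finite "lborel :: (real^'p) measure" R
    by (intro pair_sigma_finite.intro sigma_finite_lborel R)
  let ?M = "lborel \<Otimes>\<^sub>M R :: ((real^'p) \<times> 'w) measure"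
  define I where "I = (\<lambda>w. \<integral>d. D (d, w) \<partial>lborel)"
  have sD: "(\<lambda>(d, w). s w * D (d, w)) = (\<lambda>z. s (snd z) * D z)" by auto
  have D_measurable[measurable]: "D \<in> borel_measurable ?M"
    using int_D by (rule borel_measurable_integrable)
  have D_nonneg: "0 \<le> D z" for z
  proof (cases z)
    case (Pair d w)
    then show ?thesis using G[of w] gauss_kernel_pos[of X "s w" "d - c"] by (simp add: D)
  qed
  have int_I: "integrable R I" and int_sI: "integrable R (\<lambda>w. s w * I w)"
    using P.integrable_snd[of "\<lambda>d w. D (d, w)"] P.integrable_snd[of "\<lambda>d w. s w * D (d, w)"]
      int_D int_sD by (simp_all add: I_def sD)
  have integral_I: "(\<integral>w. I w \<partial>R) = (\<integral>z. D z \<partial>?M)"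
    and integral_sI: "(\<integral>w. s w * I w \<partial>R) = (\<integral>z. s (snd z) * D z \<partial>?M)"
    using P.integral_snd[of "\<lambda>d w. D (d, w)"] P.integral_snd[of "\<lambda>d w. s w * D (d, w)"]
      int_D int_sD by (simp_all add: I_def sD)
  have fiber: "AE w in R.
      (\<forall>k. integrable lborel (\<lambda>d. d $ k * D (d, w)) \<and> (\<integral>d. d $ k * D (d, w) \<partial>lborel) = c $ k * I w)
    \<and> (\<forall>k l. integrable lborel (\<lambda>d. d $ k * d $ l * D (d, w))
         \<and> (\<integral>d. d $ k * d $ l * D (d, w) \<partial>lborel) = c $ k * c $ l * I w + V $ k $ l * (s w * I w))"
    using s
  proof eventually_elim
    case (elim w)
    show ?case unfolding D I_def V_def
      using gauss_kernel_scaled_moments[OF rk \<open>0 < s w\<close>, where G = "G w" and c = c] by blast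
  qed
  have int_sq: "integrable ?M (\<lambda>z. fst z $ k * fst z $ k * D z)" for k
  proof (rule P.integrable_pair_measure_nonneg_fiberwise)
    show "0 \<le> fst z $ k * fst z $ k * D z" for z using D_nonneg[of z] by simp
    show "integrable R (\<lambda>w. c $ k * c $ k * I w + V $ k $ k * (s w * I w))"
      using int_I int_sI by simp
    show "AE w in R. integrable lborel (\<lambda>d. fst (d, w) $ k * fst (d, w) $ k * D (d, w))
        \<and> (\<integral>d. fst (d, w) $ k * fst (d, w) $ k * D (d, w) \<partial>lborel)
            = c $ k * c $ k * I w + V $ k $ k * (s w * I w)"
      using fiber by eventually_elim simp
  qed measurable
  show int1: "integrable ?M (\<lambda>z. fst z $ k * D z)"
    and int2: "integrable ?M (\<lambda>z. fst z $ k * fst z $ l * D z)"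
    by (rule integrable_moments_from_second_moments[OF D_nonneg int_D _ _ int_sq int_sq]; measurable)+
  have "AE w in R. (\<integral>d. d $ k * D (d, w) \<partial>lborel) = c $ k * I w"
    using fiber by eventually_elim simp
  then show "(\<integral>z. fst z $ k * D z \<partial>?M) = c $ k * (\<integral>z. D z \<partial>?M)"
    using P.integral_pair_measure_fiberwise[OF int1, of "\<lambda>w. c $ k * I w"] int_I
    by (simp add: integral_I borel_measurable_integrable)
  have "AE w in R. (\<integral>d. d $ k * d $ l * D (d, w) \<partial>lborel) = c $ k * c $ l * I w + V $ k $ l * (s w * I w)"
    using fiber by eventually_elim simp
  then show "(\<integral>z. fst z $ k * fst z $ l * D z \<partial>?M)
        = c $ k * c $ l * (\<integral>z. D z \<partial>?M) + V $ k $ l * (\<integral>z. s (snd z) * D z \<partial>?M)"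
    using P.integral_pair_measure_fiberwise[OF int2, of "\<lambda>w. c $ k * c $ l * I w + V $ k $ l * (s w * I w)"]
      int_I int_sI by (simp add: integral_I integral_sI borel_measurable_integrable)
qed

section \<open>Factorisation of the posterior density\<close>

definition rnr_nuisance_dens ::
  "real^'p::finite^('n::finite\<times>'n) \<Rightarrow> real^('n\<times>'n) \<Rightarrow>
   (real^'n) \<times> (real^'n) \<times> (real \<times> real \<times> real) \<Rightarrow> real" where
  "rnr_nuisance_dens X y w = (case w of (a, b, (sa, sb, se)) \<Rightarrow>
     gauss_dens sa a * gauss_dens sb b * (2 * pi * se) powr (- real CARD('n\<times>'n) / 2)
     * exp (- ((norm ((mat 1 - proj_X X) *v (y - sender_inc *v a - receiver_inc *v b)))\<^sup>2) / (2 * se)))"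

lemma rnr_nuisance_dens_nonneg: "0 \<le> rnr_nuisance_dens X y w"
  by (simp add: rnr_nuisance_dens_def gauss_dens_def split: prod.splits)

lemma proj_X_orthogonal_complement:
  fixes X :: "real^'p::finite^'m::finite"
  assumes rk: "rank X = CARD('p)"
  shows "(X *v v) \<bullet> ((mat 1 - proj_X X) *v w) = 0"
proof -
  have "proj_X X *v w = X *v (matrix_inv (transpose X ** X) *v (transpose X *v w))"
    by (simp only: proj_X_def matrix_vector_mul_assoc matrix_mul_assoc)
  then have "transpose X *v (proj_X X *v w) = transpose X *v w"
    by (simp only: matrix_vector_mul_assoc[of "transpose X" X] gram_mult_matrix_inv_gram[OF rk])
  then have "transpose X *v ((mat 1 - proj_X X) *v w) = 0"
    by (simp add: matrix_vector_mult_diff_rdistrib matrix_vector_mult_diff_distrib)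
  moreover have "(X *v v) \<bullet> ((mat 1 - proj_X X) *v w) = v \<bullet> (transpose X *v ((mat 1 - proj_X X) *v w))"
    using dot_lmul_matrix[of v "transpose X"] by simp
  ultimately show ?thesis by simp
qed

lemma rnr_post_dens_factor:
  fixes X :: "real^'p::finite^('n::finite\<times>'n)" and y :: "real^('n\<times>'n)"
  assumes rk: "rank X = CARD('p)"
  shows "rnr_post_dens X y (d, w) = rnr_nuisance_dens X y w
           * gauss_kernel X (snd (snd (snd (snd w)))) (d - matrix_inv (transpose X ** X) *v (transpose X *v y))"
proof -
  obtain a b sa sb se where w: "w = (a, b, sa, sb, se)" by (cases w) auto
  let ?c = "matrix_inv (transpose X ** X) *v (transpose X *v y)"
  let ?M = "mat 1 - proj_X X"
  let ?z = "y - sender_inc *v a - receiver_inc *v b"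
  let ?r = "y - X *v d - ?M *v (sender_inc *v a) - ?M *v (receiver_inc *v b)"
  have M: "?M *v u = u - proj_X X *v u" for u by (simp add: matrix_vector_mult_diff_rdistrib)
  have P: "proj_X X *v (u - v) = proj_X X *v u - proj_X X *v v" for u v
    by (simp add: matrix_vector_mult_diff_distrib)
  have "proj_X X *v y = X *v ?c"
    by (simp only: proj_X_def matrix_vector_mul_assoc matrix_mul_assoc)
  then have "?r = X *v (?c - d) + ?M *v ?z"
    unfolding M P by (simp add: matrix_vector_mult_diff_distrib algebra_simps)
  then have "(norm ?r)\<^sup>2 = (norm (X *v (?c - d)))\<^sup>2 + (norm (?M *v ?z))\<^sup>2"
    by (metis norm_add_Pythagorean orthogonal_def proj_X_orthogonal_complement[OF rk])
  also have "norm (X *v (?c - d)) = norm (X *v (d - ?c))"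
    by (metis minus_diff_eq matrix_vector_mult_uminus norm_minus_cancel)
  finally have "exp (- (norm ?r * norm ?r / (2 * se)))
      = exp (- ((norm (?M *v ?z))\<^sup>2 / (2 * se))) * exp (- ((norm (X *v (d - ?c)))\<^sup>2 / (2 * se)))"
    by (simp add: add_divide_distrib power2_eq_square flip: exp_add)
  then show ?thesis
    unfolding w rnr_post_dens_def rnr_nuisance_dens_def gauss_kernel_def
    by (simp add: gauss_dens_def[of se] card_cartesian_product)
qed

lemma AE_pair_measure_snd:
  assumes "pair_sigma_finite M N" and P[measurable]: "Measurable.pred N P" and ae: "AE x in N. P x"
  shows "AE z in M \<Otimes>\<^sub>M N. P (snd z)"
proof -
  interpret pair_sigma_finite M N by fact
  show ?thesis by (rule AE_pair_measure) (simp_all add: ae)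
qed

lemma AE_rnr_error_variance_pos:
  fixes nu :: "(real \<times> real \<times> real) measure"
  assumes nu_sets: "sets nu = sets borel" and nu_sf: "sigma_finite_measure nu"
    and nu_pos: "AE \<theta> in nu. 0 < snd (snd \<theta>)"
  shows "AE w in (lborel :: (real^'n::finite) measure) \<Otimes>\<^sub>M ((lborel :: (real^'n) measure) \<Otimes>\<^sub>M nu).
           0 < snd (snd (snd (snd w)))"
proof -
  have "(\<lambda>\<theta>::real \<times> real \<times> real. snd (snd \<theta>)) \<in> borel_measurable nu"
    unfolding measurable_cong_sets[OF nu_sets refl]
    by (intro borel_measurable_continuous_onI continuous_intros)
  then show ?thesis
    using nu_pos
    by (intro AE_pair_measure_snd[where P = "\<lambda>w. 0 < snd (snd (snd w))"]
        AE_pair_measure_snd[where P = "\<lambda>\<theta>. 0 < snd (snd \<theta>)"] pair_sigma_finite.intro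
        sigma_finite_lborel nu_sf sigma_finite_pair_measure) auto
qed

theorem theorem1:
  fixes X :: "real^'p::finite^('n::finite\<times>'n)" and y :: "real^('n\<times>'n)"
    and nu :: "(real \<times> real \<times> real) measure"
  assumes full_rank: "rank X = CARD('p)"
    and nu_sets: "sets nu = sets borel"
    and nu_sf: "sigma_finite_measure nu"
    and nu_pos: "AE \<theta> in nu. 0 < fst \<theta> \<and> 0 < fst (snd \<theta>) \<and> 0 < snd (snd \<theta>)"
    and proper: "integrable (rnr_space nu) (rnr_post_dens X y)"
    and proper_pos: "0 < (\<integral>z. rnr_post_dens X y z \<partial>rnr_space nu)"
    and Ese_finite: "integrable (rnr_space nu)
                       (\<lambda>z. snd (snd (snd (snd (snd z)))) * rnr_post_dens X y z)"
  shows "(\<forall>k. integrable (rnr_space nu) (\<lambda>z. fst z $ k * rnr_post_dens X y z))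
       \<and> (\<forall>k l. integrable (rnr_space nu) (\<lambda>z. fst z $ k * fst z $ l * rnr_post_dens X y z))
       \<and> (\<chi> k. post_E nu X y (\<lambda>z. fst z $ k))
            = matrix_inv (transpose X ** X) *v (transpose X *v y)
       \<and> (\<chi> k l. post_E nu X y (\<lambda>z. fst z $ k * fst z $ l)
                  - post_E nu X y (\<lambda>z. fst z $ k) * post_E nu X y (\<lambda>z. fst z $ l))
            = post_E nu X y (\<lambda>z. snd (snd (snd (snd (snd z)))))
                *\<^sub>R matrix_inv (transpose X ** X)"
proof -
  define R where "R = (lborel :: (real^'n) measure) \<Otimes>\<^sub>M ((lborel :: (real^'n) measure) \<Otimes>\<^sub>M nu)"
  have space: "rnr_space nu = (lborel :: (real^'p) measure) \<Otimes>\<^sub>M R"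
    by (simp add: rnr_space_def R_def)
  have sf_R: "sigma_finite_measure R"
    unfolding R_def by (intro sigma_finite_pair_measure sigma_finite_lborel nu_sf)
  \<comment> \<open>only the positivity of the error variance is needed\<close>
  have "AE w in R. 0 < snd (snd (snd (snd w)))"
    unfolding R_def using nu_pos by (intro AE_rnr_error_variance_pos nu_sets nu_sf) (auto elim: eventually_mono)
  note moments = gauss_kernel_mixture_moments[where D = "rnr_post_dens X y" and R = R
      and G = "rnr_nuisance_dens X y" and s = "\<lambda>w. snd (snd (snd (snd w)))",
      OF full_rank sf_R rnr_post_dens_factor[OF full_rank] rnr_nuisance_dens_nonneg this,
      folded space, OF proper Ese_finite]
  have mean: "post_E nu X y (\<lambda>z. fst z $ k) = (matrix_inv (transpose X ** X) *v (transpose X *v y)) $ k"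
    for k using moments(2) proper_pos by (simp add: post_E_def)
  have second_moment: "post_E nu X y (\<lambda>z. fst z $ k * fst z $ l)
      = (matrix_inv (transpose X ** X) *v (transpose X *v y)) $ k
          * (matrix_inv (transpose X ** X) *v (transpose X *v y)) $ l
        + matrix_inv (transpose X ** X) $ k $ l * post_E nu X y (\<lambda>z. snd (snd (snd (snd (snd z)))))"
    for k l using moments(4) proper_pos by (simp add: post_E_def add_divide_distrib)
  show ?thesis using moments(1,3) by (simp add: mean second_moment vec_eq_iff)
qed

end
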